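(* Let $\Sigma$ be a finite group, $A$ a difference closed pseudofield and $X\subseteq A^n$ a pseudovariety. Then every function $f\colon X\to A$ that is regular at every point of $X$ is given by a difference polynomial; that is, $\mathcal O_X(X)=A\{X\}$.
   Context: A difference ring is a commutative ring with identity with an action of $\Sigma$ by ring automorphisms. A pseudofield is an absolutely flat difference ring with no $\Sigma$-stable ideals other than $0$ and itself; it is difference closed if for every $n$ and every $\Sigma$-stable ideal $\mathfrak a$ of $R_n=A\{y_1,\dots,y_n\}$ the radical of $\mathfrak a$ equals $I(V(\mathfrak a))$. Here $A\{y_1,\dots,y_n\}$ is the polynomial ring over $A$ in indeterminates $\sigma y_i$ ($\sigma\in\Sigma$), with $\tau(\sigma y_i)=(\tau\sigma)y_i$; for $a\in A^n$, $f(a)$ is given by $\sigma y_i\mapsto\sigma(a_i)$; $V(E)=\{a\in A^n\mid f(a)=0\ \forall f\in E\}$, $I(X)=\{f\in R_n\mid f|_X=0\}$. A pseudovariety is a set $X=V(E)\subseteq A^n$; it carries the topology whose closed sets are the sets $X\cap V(E')$. $A\{X\}=R_n/I(X)$, identified with the ring of functions $X\to A$ given by difference polynomials. A function $f\colon X\to A$ is regular at $x\in X$ if there are an open $U\ni x$ in $X$ and $h,g\in R_n$ such that $g(y)$ is invertible in $A$ and $f(y)=h(y)/g(y)$ for all $y\in U$; $\mathcal O_X(U)$ is the ring of functions $U\to A$ regular at every point of $U$. *)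

theory Defs
  imports "HOL-Algebra.Group" "HOL-Library.Poly_Mapping"
begin

text \<open>A finite group Sigma is a HOL-Algebra group G; the difference ring A is a type 'a
  of class comm_ring_1 together with an action act of G on 'a by ring automorphisms.\<close>

definition ring_aut :: "('a::comm_ring_1 \<Rightarrow> 'a) \<Rightarrow> bool" where
  "ring_aut s \<longleftrightarrow> bij s \<and> (\<forall>x y. s (x + y) = s x + s y) \<and> (\<forall>x y. s (x * y) = s x * s y) \<and> s 1 = 1"

definition difference_ring :: "('g, 'b) monoid_scheme \<Rightarrow> ('g \<Rightarrow> 'a::comm_ring_1 \<Rightarrow> 'a) \<Rightarrow> bool" where
  "difference_ring G act \<longleftrightarrow> group G \<and>
     (\<forall>s\<in>carrier G. ring_aut (act s)) \<and> act \<one>\<^bsub>G\<^esub> = id \<and>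
     (\<forall>s\<in>carrier G. \<forall>t\<in>carrier G. act (s \<otimes>\<^bsub>G\<^esub> t) = act s \<circ> act t)"

definition is_ideal_in :: "'r::comm_ring_1 set \<Rightarrow> 'r set \<Rightarrow> bool" where
  "is_ideal_in S I \<longleftrightarrow> I \<subseteq> S \<and> 0 \<in> I \<and> (\<forall>x\<in>I. \<forall>y\<in>I. x + y \<in> I) \<and> (\<forall>x\<in>I. - x \<in> I)
     \<and> (\<forall>x\<in>I. \<forall>r\<in>S. r * x \<in> I)"

definition radical_in :: "'r::comm_ring_1 set \<Rightarrow> 'r set \<Rightarrow> 'r set" where
  "radical_in S I = {x \<in> S. \<exists>k::nat. x ^ k \<in> I}"

definition absolutely_flat :: "'a::comm_ring_1 itself \<Rightarrow> bool" where
  "absolutely_flat _ \<longleftrightarrow> (\<forall>a::'a. \<exists>b. a = a * a * b)"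

definition stable_ideal_A :: "('g, 'b) monoid_scheme \<Rightarrow> ('g \<Rightarrow> 'a::comm_ring_1 \<Rightarrow> 'a) \<Rightarrow> 'a set \<Rightarrow> bool" where
  "stable_ideal_A G act I \<longleftrightarrow> is_ideal_in UNIV I \<and> (\<forall>s\<in>carrier G. \<forall>x\<in>I. act s x \<in> I)"

definition pseudofield :: "('g, 'b) monoid_scheme \<Rightarrow> ('g \<Rightarrow> 'a::comm_ring_1 \<Rightarrow> 'a) \<Rightarrow> bool" where
  "pseudofield G act \<longleftrightarrow> difference_ring G act \<and> absolutely_flat TYPE('a) \<and>
     (\<forall>I. stable_ideal_A G act I \<longrightarrow> I = {0} \<or> I = UNIV)"

text \<open>Difference polynomials: polynomials over 'a in the indeterminates (s, i) standing for
  s y_i, s \<in> Sigma, i < n. Monomials are finitely supported exponent maps.\<close>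
type_synonym ('g, 'a) dpoly = "(('g \<times> nat) \<Rightarrow>\<^sub>0 nat) \<Rightarrow>\<^sub>0 'a"

definition dpolys :: "('g, 'b) monoid_scheme \<Rightarrow> nat \<Rightarrow> ('g, 'a::comm_ring_1) dpoly set" where
  "dpolys G n = {p. \<forall>m\<in>Poly_Mapping.keys p. \<forall>v\<in>Poly_Mapping.keys m. fst v \<in> carrier G \<and> snd v < n}"

text \<open>Action of t on A{y}: t(s y_i) = (t s) y_i, and t acts on coefficients.\<close>
definition mono_act :: "('g, 'b) monoid_scheme \<Rightarrow> 'g \<Rightarrow> (('g \<times> nat) \<Rightarrow>\<^sub>0 nat) \<Rightarrow> (('g \<times> nat) \<Rightarrow>\<^sub>0 nat)" where
  "mono_act G t m = (\<Sum>v\<in>Poly_Mapping.keys m. Poly_Mapping.single (t \<otimes>\<^bsub>G\<^esub> fst v, snd v) (Poly_Mapping.lookup m v))"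

definition dpoly_act :: "('g, 'b) monoid_scheme \<Rightarrow> ('g \<Rightarrow> 'a::comm_ring_1 \<Rightarrow> 'a) \<Rightarrow> 'g \<Rightarrow> ('g, 'a) dpoly \<Rightarrow> ('g, 'a) dpoly" where
  "dpoly_act G act t p = (\<Sum>m\<in>Poly_Mapping.keys p. Poly_Mapping.single (mono_act G t m) (act t (Poly_Mapping.lookup p m)))"

text \<open>Points of A^n: functions nat \<Rightarrow> 'a vanishing from index n on.\<close>
definition points :: "nat \<Rightarrow> (nat \<Rightarrow> 'a::zero) set" where
  "points n = {a. \<forall>i\<ge>n. a i = 0}"

definition dpoly_eval :: "('g \<Rightarrow> 'a::comm_ring_1 \<Rightarrow> 'a) \<Rightarrow> ('g, 'a) dpoly \<Rightarrow> (nat \<Rightarrow> 'a) \<Rightarrow> 'a" where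
  "dpoly_eval act p a = (\<Sum>m\<in>Poly_Mapping.keys p. Poly_Mapping.lookup p m * (\<Prod>v\<in>Poly_Mapping.keys m. act (fst v) (a (snd v)) ^ Poly_Mapping.lookup m v))"

definition dV :: "('g \<Rightarrow> 'a::comm_ring_1 \<Rightarrow> 'a) \<Rightarrow> nat \<Rightarrow> ('g, 'a) dpoly set \<Rightarrow> (nat \<Rightarrow> 'a) set" where
  "dV act n E = {a \<in> points n. \<forall>f\<in>E. dpoly_eval act f a = 0}"

definition dI :: "('g, 'b) monoid_scheme \<Rightarrow> ('g \<Rightarrow> 'a::comm_ring_1 \<Rightarrow> 'a) \<Rightarrow> nat \<Rightarrow> (nat \<Rightarrow> 'a) set \<Rightarrow> ('g, 'a) dpoly set" where
  "dI G act n X = {f \<in> dpolys G n. \<forall>a\<in>X. dpoly_eval act f a = 0}"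

definition stable_ideal_R :: "('g, 'b) monoid_scheme \<Rightarrow> ('g \<Rightarrow> 'a::comm_ring_1 \<Rightarrow> 'a) \<Rightarrow> nat \<Rightarrow> ('g, 'a) dpoly set \<Rightarrow> bool" where
  "stable_ideal_R G act n I \<longleftrightarrow> is_ideal_in (dpolys G n) I \<and>
     (\<forall>t\<in>carrier G. \<forall>p\<in>I. dpoly_act G act t p \<in> I)"

definition difference_closed :: "('g, 'b) monoid_scheme \<Rightarrow> ('g \<Rightarrow> 'a::comm_ring_1 \<Rightarrow> 'a) \<Rightarrow> bool" where
  "difference_closed G act \<longleftrightarrow> pseudofield G act \<and>
     (\<forall>n I. stable_ideal_R G act n I \<longrightarrow> radical_in (dpolys G n) I = dI G act n (dV act n I))"

definition pseudovariety :: "('g, 'b) monoid_scheme \<Rightarrow> ('g \<Rightarrow> 'a::comm_ring_1 \<Rightarrow> 'a) \<Rightarrow> nat \<Rightarrow> (nat \<Rightarrow> 'a) set \<Rightarrow> bool" where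
  "pseudovariety G act n X \<longleftrightarrow> (\<exists>E\<subseteq>dpolys G n. X = dV act n E)"

definition open_in_pv :: "('g, 'b) monoid_scheme \<Rightarrow> ('g \<Rightarrow> 'a::comm_ring_1 \<Rightarrow> 'a) \<Rightarrow> nat \<Rightarrow> (nat \<Rightarrow> 'a) set \<Rightarrow> (nat \<Rightarrow> 'a) set \<Rightarrow> bool" where
  "open_in_pv G act n X U \<longleftrightarrow> (\<exists>E'\<subseteq>dpolys G n. U = X - dV act n E')"

definition regular_at :: "('g, 'b) monoid_scheme \<Rightarrow> ('g \<Rightarrow> 'a::comm_ring_1 \<Rightarrow> 'a) \<Rightarrow> nat \<Rightarrow> (nat \<Rightarrow> 'a) set
     \<Rightarrow> ((nat \<Rightarrow> 'a) \<Rightarrow> 'a) \<Rightarrow> (nat \<Rightarrow> 'a) \<Rightarrow> bool" where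
  "regular_at G act n X f x \<longleftrightarrow> (\<exists>U h g. open_in_pv G act n X U \<and> x \<in> U \<and>
     h \<in> dpolys G n \<and> g \<in> dpolys G n \<and>
     (\<forall>y\<in>U. dpoly_eval act g y dvd 1 \<and> f y * dpoly_eval act g y = dpoly_eval act h y))"

end

theory Submission
  imports Defs
begin

(* Let X = V(E) and let f be regular on X.  Call a difference polynomial p a
   denominator of f if, for every s in Sigma, the function y |-> s(p(y)) * f(y) agrees
   on X with a difference polynomial.  The denominators form a Sigma-stable ideal Q.
   Q has no zeros in A^n: a point outside X is not a zero of some e in E, and e lies
   in Q because it vanishes on X; at a point y of X, regularity yields a polynomial p
   with p(y) a unit and p*f polynomial on X (the local denominator g is multiplied by
   a combination of the Sigma-translates of a polynomial defining the open set, using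
   that A has no nontrivial stable ideals), and its norm, the product of all
   Sigma-translates of p, is a Sigma-invariant element of Q not vanishing at y.
   Since A is difference closed, V(Q) = {} forces 1 in Q, i.e. f is a polynomial. *)

definition mon_eval :: "('g \<Rightarrow> 'a::comm_ring_1 \<Rightarrow> 'a) \<Rightarrow> (('g \<times> nat) \<Rightarrow>\<^sub>0 nat) \<Rightarrow> (nat \<Rightarrow> 'a) \<Rightarrow> 'a" where
  "mon_eval act m a = (\<Prod>v\<in>Poly_Mapping.keys m. act (fst v) (a (snd v)) ^ Poly_Mapping.lookup m v)"

lemma mon_eval_superset:
  assumes "finite S" "Poly_Mapping.keys m \<subseteq> S"
  shows "mon_eval act m a = (\<Prod>v\<in>S. act (fst v) (a (snd v)) ^ Poly_Mapping.lookup m v)"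
  unfolding mon_eval_def
  by (rule prod.mono_neutral_left[OF assms]) (auto simp: not_in_keys_iff_lookup_eq_zero)

lemma dpoly_eval_superset:
  assumes "finite S" "Poly_Mapping.keys p \<subseteq> S"
  shows "dpoly_eval act p a = (\<Sum>m\<in>S. Poly_Mapping.lookup p m * mon_eval act m a)"
  unfolding dpoly_eval_def mon_eval_def
  by (rule sum.mono_neutral_left[OF assms]) (auto simp: not_in_keys_iff_lookup_eq_zero)

lemma mon_eval_add: "mon_eval act (m1 + m2) a = mon_eval act m1 a * mon_eval act m2 a"
proof -
  let ?S = "Poly_Mapping.keys m1 \<union> Poly_Mapping.keys m2"
  have "mon_eval act (m1 + m2) a = (\<Prod>v\<in>?S. act (fst v) (a (snd v)) ^ Poly_Mapping.lookup (m1 + m2) v)"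
    by (rule mon_eval_superset) (auto simp: keys_add)
  also have "\<dots> = mon_eval act m1 a * mon_eval act m2 a"
    by (simp add: lookup_add power_add prod.distrib mon_eval_superset[of ?S m1] mon_eval_superset[of ?S m2])
  finally show ?thesis .
qed

lemma mon_eval_sum: "mon_eval act (\<Sum>i\<in>S. m i) a = (\<Prod>i\<in>S. mon_eval act (m i) a)"
  by (induction S rule: infinite_finite_induct) (auto simp: mon_eval_add, simp_all add: mon_eval_def)

lemma mon_eval_single: "mon_eval act (Poly_Mapping.single w k) a = act (fst w) (a (snd w)) ^ k"
  by (simp add: mon_eval_def)

lemma dpoly_eval_add: "dpoly_eval act (p + q) a = dpoly_eval act p a + dpoly_eval act q a"
proof -
  let ?S = "Poly_Mapping.keys p \<union> Poly_Mapping.keys q"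
  have "dpoly_eval act (p + q) a = (\<Sum>m\<in>?S. Poly_Mapping.lookup (p + q) m * mon_eval act m a)"
    by (rule dpoly_eval_superset) (auto simp: keys_add)
  also have "\<dots> = dpoly_eval act p a + dpoly_eval act q a"
    by (simp add: lookup_add distrib_right sum.distrib dpoly_eval_superset[of ?S p] dpoly_eval_superset[of ?S q])
  finally show ?thesis .
qed

lemma dpoly_eval_sum: "dpoly_eval act (\<Sum>i\<in>S. p i) a = (\<Sum>i\<in>S. dpoly_eval act (p i) a)"
  by (induction S rule: infinite_finite_induct) (auto simp: dpoly_eval_add, simp_all add: dpoly_eval_def)

lemma dpoly_eval_single: "dpoly_eval act (Poly_Mapping.single m c) a = c * mon_eval act m a"
  by (simp add: dpoly_eval_def mon_eval_def)

lemma dpoly_eval_uminus: "dpoly_eval act (- p) a = - dpoly_eval act p a"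
  unfolding dpoly_eval_def by (simp add: lookup_uminus sum_negf)

lemma poly_mapping_monomial_expansion:
  "p = (\<Sum>m\<in>Poly_Mapping.keys p. Poly_Mapping.single m (Poly_Mapping.lookup p m))"
proof (rule poly_mapping_eqI)
  fix k
  show "Poly_Mapping.lookup p k = Poly_Mapping.lookup (\<Sum>m\<in>Poly_Mapping.keys p. Poly_Mapping.single m (Poly_Mapping.lookup p m)) k"
    by (cases "k \<in> Poly_Mapping.keys p")
       (auto simp: lookup_sum lookup_single when_def not_in_keys_iff_lookup_eq_zero)
qed

lemma dpoly_eval_mult: "dpoly_eval act (p * q) a = dpoly_eval act p a * dpoly_eval act q a"
proof -
  let ?P = "Poly_Mapping.keys p" and ?Q = "Poly_Mapping.keys q"
  have "p * q = (\<Sum>m\<in>?P. Poly_Mapping.single m (Poly_Mapping.lookup p m)) * (\<Sum>m'\<in>?Q. Poly_Mapping.single m' (Poly_Mapping.lookup q m'))"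
    using poly_mapping_monomial_expansion[of p] poly_mapping_monomial_expansion[of q] by simp
  also have "\<dots> = (\<Sum>m\<in>?P. \<Sum>m'\<in>?Q. Poly_Mapping.single (m + m') (Poly_Mapping.lookup p m * Poly_Mapping.lookup q m'))"
    by (simp add: sum_product mult_single)
  finally have "dpoly_eval act (p * q) a = (\<Sum>m\<in>?P. \<Sum>m'\<in>?Q. (Poly_Mapping.lookup p m * mon_eval act m a) * (Poly_Mapping.lookup q m' * mon_eval act m' a))"
    by (simp add: dpoly_eval_sum dpoly_eval_single mon_eval_add ac_simps)
  also have "\<dots> = dpoly_eval act p a * dpoly_eval act q a"
    by (simp add: dpoly_eval_def mon_eval_def sum_product)
  finally show ?thesis .
qed

lemma dpoly_eval_one: "dpoly_eval act 1 a = 1"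
  using dpoly_eval_single[of act 0 1 a] by (simp add: mon_eval_def)

lemma dpoly_eval_prod: "dpoly_eval act (\<Prod>i\<in>S. p i) a = (\<Prod>i\<in>S. dpoly_eval act (p i) a)"
  by (induction S rule: infinite_finite_induct) (auto simp: dpoly_eval_mult dpoly_eval_one)

lemma ring_aut_add: "ring_aut s \<Longrightarrow> s (x + y) = s x + s y"
  and ring_aut_mult: "ring_aut s \<Longrightarrow> s (x * y) = s x * s y"
  and ring_aut_one: "ring_aut s \<Longrightarrow> s 1 = 1"
  unfolding ring_aut_def by blast+

lemma ring_aut_zero: "ring_aut s \<Longrightarrow> s 0 = 0"
  using ring_aut_add[of s 0 0] by simp

lemma ring_aut_uminus: "ring_aut s \<Longrightarrow> s (- x) = - s x"
  using ring_aut_add[of s "- x" x] ring_aut_zero[of s] by (simp add: eq_neg_iff_add_eq_0)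

lemma ring_aut_sum: "ring_aut s \<Longrightarrow> s (\<Sum>i\<in>S. g i) = (\<Sum>i\<in>S. s (g i))"
  by (induction S rule: infinite_finite_induct) (auto simp: ring_aut_zero ring_aut_add)

lemma ring_aut_prod: "ring_aut s \<Longrightarrow> s (\<Prod>i\<in>S. g i) = (\<Prod>i\<in>S. s (g i))"
  by (induction S rule: infinite_finite_induct) (auto simp: ring_aut_one ring_aut_mult)

lemma ring_aut_power: "ring_aut s \<Longrightarrow> s (x ^ k) = s x ^ k"
  by (induction k) (auto simp: ring_aut_one ring_aut_mult)

lemma ring_aut_unit: "ring_aut s \<Longrightarrow> x dvd 1 \<Longrightarrow> s x dvd 1"
  by (metis dvdE dvdI ring_aut_mult ring_aut_one)

lemma units_prod: "(\<And>i. i \<in> S \<Longrightarrow> (g i::'a::comm_semiring_1) dvd 1) \<Longrightarrow> (\<Prod>i\<in>S. g i) dvd 1"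
proof (induction S rule: infinite_finite_induct)
  case (insert x F)
  then show ?case using mult_dvd_mono[of "g x" 1 "prod g F" 1] by simp
qed auto

lemma difference_ringD:
  assumes "difference_ring G act"
  shows "group G" and "\<And>s. s \<in> carrier G \<Longrightarrow> ring_aut (act s)" and "act \<one>\<^bsub>G\<^esub> = id"
    and "\<And>s t. s \<in> carrier G \<Longrightarrow> t \<in> carrier G \<Longrightarrow> act (s \<otimes>\<^bsub>G\<^esub> t) = act s \<circ> act t"
  using assms unfolding difference_ring_def by auto

lemma group_left_mult_bij:
  "group G \<Longrightarrow> t \<in> carrier G \<Longrightarrow> bij_betw (\<lambda>x. t \<otimes>\<^bsub>G\<^esub> x) (carrier G) (carrier G)"
  by (simp add: bij_betw_def group.inj_on_cmult group.surj_const_mult)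

lemma dpolys_zero: "0 \<in> dpolys G n"
  and dpolys_one: "1 \<in> dpolys G n"
  and dpolys_const: "Poly_Mapping.single 0 c \<in> dpolys G n"
  unfolding dpolys_def by simp_all

lemma dpolys_add: "p \<in> dpolys G n \<Longrightarrow> q \<in> dpolys G n \<Longrightarrow> p + q \<in> dpolys G n"
  unfolding dpolys_def using keys_add[of p q] by blast

lemma dpolys_uminus: "p \<in> dpolys G n \<Longrightarrow> - p \<in> dpolys G n"
  unfolding dpolys_def by simp

lemma dpolys_mult:
  assumes p: "p \<in> dpolys G n" and q: "q \<in> dpolys G n"
  shows "p * q \<in> dpolys G n"
  unfolding dpolys_def
proof (intro CollectI ballI)
  fix m v assume m: "m \<in> Poly_Mapping.keys (p * q)" and v: "v \<in> Poly_Mapping.keys m"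
  obtain a b where ab: "m = a + b" "a \<in> Poly_Mapping.keys p" "b \<in> Poly_Mapping.keys q"
    using keys_mult[of p q] m by blast
  have "v \<in> Poly_Mapping.keys a \<or> v \<in> Poly_Mapping.keys b"
    using keys_add[of a b] v ab(1) by blast
  then show "fst v \<in> carrier G \<and> snd v < n" using p q ab unfolding dpolys_def by blast
qed

lemma dpolys_sum: "(\<And>i. i \<in> S \<Longrightarrow> g i \<in> dpolys G n) \<Longrightarrow> (\<Sum>i\<in>S. g i) \<in> dpolys G n"
  by (induction S rule: infinite_finite_induct) (auto simp: dpolys_zero dpolys_add)

lemma dpolys_prod: "(\<And>i. i \<in> S \<Longrightarrow> g i \<in> dpolys G n) \<Longrightarrow> (\<Prod>i\<in>S. g i) \<in> dpolys G n"
  by (induction S rule: infinite_finite_induct) (auto simp: dpolys_one dpolys_mult)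

lemma dpolys_act:
  assumes G: "group G" and t: "t \<in> carrier G" and p: "p \<in> dpolys G n"
  shows "dpoly_act G act t p \<in> dpolys G n"
  unfolding dpolys_def
proof (intro CollectI ballI)
  fix m v assume m: "m \<in> Poly_Mapping.keys (dpoly_act G act t p)" and v: "v \<in> Poly_Mapping.keys m"
  have "Poly_Mapping.keys (dpoly_act G act t p) \<subseteq> mono_act G t ` Poly_Mapping.keys p"
    unfolding dpoly_act_def by (rule order_trans[OF keys_sum]) auto
  then obtain m0 where m0: "m0 \<in> Poly_Mapping.keys p" "m = mono_act G t m0" using m by blast
  have "Poly_Mapping.keys (mono_act G t m0) \<subseteq> (\<lambda>v. (t \<otimes>\<^bsub>G\<^esub> fst v, snd v)) ` Poly_Mapping.keys m0"
    unfolding mono_act_def by (rule order_trans[OF keys_sum]) auto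
  then obtain v0 where v0: "v0 \<in> Poly_Mapping.keys m0" "v = (t \<otimes>\<^bsub>G\<^esub> fst v0, snd v0)"
    using v m0 by blast
  have "fst v0 \<in> carrier G" "snd v0 < n" using p m0 v0 unfolding dpolys_def by auto
  then show "fst v \<in> carrier G \<and> snd v < n" using v0 G t by (simp add: group.subgroup_self subgroup.m_closed)
qed

lemma dpoly_eval_act:
  assumes dr: "difference_ring G act" and t: "t \<in> carrier G" and p: "p \<in> dpolys G n"
  shows "dpoly_eval act (dpoly_act G act t p) y = act t (dpoly_eval act p y)"
proof -
  note aut = difference_ringD(2)[OF dr] and comp = difference_ringD(4)[OF dr]
  have mon: "mon_eval act (mono_act G t m) y = act t (mon_eval act m y)" if "m \<in> Poly_Mapping.keys p" for m
  proof -
    have "mon_eval act (mono_act G t m) y = (\<Prod>v\<in>Poly_Mapping.keys m. act (t \<otimes>\<^bsub>G\<^esub> fst v) (y (snd v)) ^ Poly_Mapping.lookup m v)"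
      unfolding mono_act_def by (simp add: mon_eval_sum mon_eval_single)
    also have "\<dots> = (\<Prod>v\<in>Poly_Mapping.keys m. act t (act (fst v) (y (snd v)) ^ Poly_Mapping.lookup m v))"
      using that p unfolding dpolys_def
      by (intro prod.cong refl) (simp add: comp t ring_aut_power aut)
    also have "\<dots> = act t (mon_eval act m y)"
      unfolding mon_eval_def by (simp add: ring_aut_prod aut t)
    finally show ?thesis .
  qed
  have "dpoly_eval act (dpoly_act G act t p) y = (\<Sum>m\<in>Poly_Mapping.keys p. act t (Poly_Mapping.lookup p m) * mon_eval act (mono_act G t m) y)"
    unfolding dpoly_act_def by (simp add: dpoly_eval_sum dpoly_eval_single)
  also have "\<dots> = (\<Sum>m\<in>Poly_Mapping.keys p. act t (Poly_Mapping.lookup p m * mon_eval act m y))"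
    by (intro sum.cong refl) (simp add: mon ring_aut_mult aut t)
  also have "\<dots> = act t (dpoly_eval act p y)"
    unfolding dpoly_eval_def mon_eval_def by (simp add: ring_aut_sum aut t)
  finally show ?thesis .
qed

lemma orbit_combinations_stable_ideal:
  assumes dr: "difference_ring G act"
  shows "stable_ideal_A G act {x. \<exists>c. x = (\<Sum>s\<in>carrier G. c s * act s a)}"
    (is "stable_ideal_A G act ?I")
  unfolding stable_ideal_A_def is_ideal_in_def
proof (intro conjI ballI)
  note G = difference_ringD(1)[OF dr] and aut = difference_ringD(2)[OF dr]
    and comp = difference_ringD(4)[OF dr]
  show "0 \<in> ?I" by (rule CollectI, rule exI[of _ "\<lambda>_. 0"]) simp
  fix x assume "x \<in> ?I"
  then obtain c where c: "x = (\<Sum>s\<in>carrier G. c s * act s a)" by blast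
  show "- x \<in> ?I" using c by (intro CollectI exI[of _ "\<lambda>s. - c s"]) (simp add: sum_negf)
  show "r * x \<in> ?I" for r using c
    by (intro CollectI exI[of _ "\<lambda>s. r * c s"]) (simp add: sum_distrib_left mult.assoc)
  show "x + y \<in> ?I" if y: "y \<in> ?I" for y
  proof -
    obtain d where "y = (\<Sum>s\<in>carrier G. d s * act s a)" using y by blast
    then show ?thesis using c
      by (intro CollectI exI[of _ "\<lambda>s. c s + d s"]) (simp add: sum.distrib distrib_right)
  qed
  show "act t x \<in> ?I" if t: "t \<in> carrier G" for t
  proof -
    let ?c' = "\<lambda>s'. act t (c (inv\<^bsub>G\<^esub> t \<otimes>\<^bsub>G\<^esub> s'))"
    have "act t x = (\<Sum>s\<in>carrier G. act t (c s) * act (t \<otimes>\<^bsub>G\<^esub> s) a)"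
      using c t by (simp add: ring_aut_sum ring_aut_mult aut comp)
    also have "\<dots> = (\<Sum>s\<in>carrier G. (\<lambda>s'. ?c' s' * act s' a) (t \<otimes>\<^bsub>G\<^esub> s))"
      using G t by (intro sum.cong refl) (simp add: group.inv_closed group.is_monoid monoid.m_assoc[symmetric] group.l_inv monoid.l_one)
    also have "\<dots> = (\<Sum>s'\<in>carrier G. ?c' s' * act s' a)"
      by (rule sum.reindex_bij_betw[OF group_left_mult_bij[OF G t]])
    finally show ?thesis by (intro CollectI exI[of _ ?c'])
  qed
qed simp

lemma pseudofield_orbit_unit:
  assumes pf: "pseudofield G act" and fin: "finite (carrier G)" and a: "a \<noteq> 0"
  shows "\<exists>c. (\<Sum>s\<in>carrier G. c s * act s a) = 1"
proof -
  define I where "I = {x. \<exists>c. x = (\<Sum>s\<in>carrier G. c s * act s a)}"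
  have dr: "difference_ring G act" using pf unfolding pseudofield_def by blast
  note G = difference_ringD(1)[OF dr] and one = difference_ringD(3)[OF dr]
  have "(\<Sum>s\<in>carrier G. (if s = \<one>\<^bsub>G\<^esub> then 1 else 0) * act s a) = (\<Sum>s\<in>carrier G. if s = \<one>\<^bsub>G\<^esub> then act s a else 0)"
    by (intro sum.cong refl) simp
  also have "\<dots> = a" using fin G one by (simp add: group.is_monoid monoid.one_closed)
  finally have "a \<in> I" unfolding I_def by (intro CollectI exI) (rule sym)
  moreover have "I = {0} \<or> I = UNIV"
    using pf orbit_combinations_stable_ideal[OF dr] unfolding pseudofield_def I_def by blast
  ultimately have "1 \<in> I" using a by blast
  then obtain c where "1 = (\<Sum>s\<in>carrier G. c s * act s a)" unfolding I_def by blast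
  then show ?thesis by (intro exI[of _ c]) simp
qed

definition polynomial_on :: "('g, 'b) monoid_scheme \<Rightarrow> ('g \<Rightarrow> 'a::comm_ring_1 \<Rightarrow> 'a) \<Rightarrow> nat
    \<Rightarrow> (nat \<Rightarrow> 'a) set \<Rightarrow> ((nat \<Rightarrow> 'a) \<Rightarrow> 'a) \<Rightarrow> bool" where
  "polynomial_on G act n X h \<longleftrightarrow> (\<exists>q\<in>dpolys G n. \<forall>y\<in>X. h y = dpoly_eval act q y)"

lemma polynomial_on_cong:
  "polynomial_on G act n X h \<Longrightarrow> (\<And>y. y \<in> X \<Longrightarrow> h y = h' y) \<Longrightarrow> polynomial_on G act n X h'"
  unfolding polynomial_on_def by metis

lemma polynomial_on_zero: "polynomial_on G act n X (\<lambda>_. 0)"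
  unfolding polynomial_on_def by (auto simp: dpolys_zero dpoly_eval_def intro!: bexI[of _ 0])

lemma polynomial_on_uminus:
  "polynomial_on G act n X h \<Longrightarrow> polynomial_on G act n X (\<lambda>y. - h y)"
  unfolding polynomial_on_def by (metis dpolys_uminus dpoly_eval_uminus)

lemma polynomial_on_add:
  "polynomial_on G act n X h \<Longrightarrow> polynomial_on G act n X h' \<Longrightarrow> polynomial_on G act n X (\<lambda>y. h y + h' y)"
  unfolding polynomial_on_def by (metis dpolys_add dpoly_eval_add)

lemma polynomial_on_scale:
  "r \<in> dpolys G n \<Longrightarrow> polynomial_on G act n X h \<Longrightarrow> polynomial_on G act n X (\<lambda>y. dpoly_eval act r y * h y)"
  unfolding polynomial_on_def by (metis dpolys_mult dpoly_eval_mult)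

text \<open>The denominators of f on X: polynomials p such that every translate s(p) times f
  is polynomial on X.  The translates are built in so that the set is Sigma-stable.\<close>
definition denominator_ideal :: "('g, 'b) monoid_scheme \<Rightarrow> ('g \<Rightarrow> 'a::comm_ring_1 \<Rightarrow> 'a) \<Rightarrow> nat
    \<Rightarrow> (nat \<Rightarrow> 'a) set \<Rightarrow> ((nat \<Rightarrow> 'a) \<Rightarrow> 'a) \<Rightarrow> ('g, 'a) dpoly set" where
  "denominator_ideal G act n X f = {p \<in> dpolys G n. \<forall>s\<in>carrier G.
     polynomial_on G act n X (\<lambda>y. act s (dpoly_eval act p y) * f y)}"

lemma denominator_ideal_stable:
  assumes dr: "difference_ring G act"
  shows "stable_ideal_R G act n (denominator_ideal G act n X f)" (is "stable_ideal_R G act n ?Q")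
  unfolding stable_ideal_R_def is_ideal_in_def
proof (intro conjI ballI)
  note G = difference_ringD(1)[OF dr] and aut = difference_ringD(2)[OF dr]
    and comp = difference_ringD(4)[OF dr]
  show "?Q \<subseteq> dpolys G n" unfolding denominator_ideal_def by blast
  show "0 \<in> ?Q" unfolding denominator_ideal_def
    by (auto simp: dpolys_zero dpoly_eval_def ring_aut_zero aut intro: polynomial_on_cong[OF polynomial_on_zero])
  fix p assume p: "p \<in> ?Q"
  then have pd: "p \<in> dpolys G n"
    and pf: "\<And>s. s \<in> carrier G \<Longrightarrow> polynomial_on G act n X (\<lambda>y. act s (dpoly_eval act p y) * f y)"
    unfolding denominator_ideal_def by auto
  show "- p \<in> ?Q" unfolding denominator_ideal_def
    using pd polynomial_on_uminus[OF pf]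
    by (auto simp: dpolys_uminus dpoly_eval_uminus ring_aut_uminus aut)
  show "p + q \<in> ?Q" if "q \<in> ?Q" for q
    using that pd polynomial_on_add[OF pf] unfolding denominator_ideal_def
    by (auto simp: dpolys_add dpoly_eval_add ring_aut_add aut distrib_right)
  show "r * p \<in> ?Q" if r: "r \<in> dpolys G n" for r
    unfolding denominator_ideal_def
  proof (intro CollectI conjI ballI)
    fix s assume s: "s \<in> carrier G"
    show "polynomial_on G act n X (\<lambda>y. act s (dpoly_eval act (r * p) y) * f y)"
      using polynomial_on_scale[OF dpolys_act[OF G s r, where act=act] pf[OF s]]
      by (rule polynomial_on_cong)
         (simp add: dpoly_eval_mult dpoly_eval_act[OF dr s r] ring_aut_mult aut s mult.assoc)
  qed (simp add: dpolys_mult r pd)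
  show "dpoly_act G act t p \<in> ?Q" if t: "t \<in> carrier G" for t
    unfolding denominator_ideal_def
  proof (intro CollectI conjI ballI)
    fix s assume s: "s \<in> carrier G"
    have "s \<otimes>\<^bsub>G\<^esub> t \<in> carrier G" using G s t by (simp add: group.subgroup_self subgroup.m_closed)
    from pf[OF this] show "polynomial_on G act n X (\<lambda>y. act s (dpoly_eval act (dpoly_act G act t p) y) * f y)"
      by (rule polynomial_on_cong) (simp add: dpoly_eval_act[OF dr t pd] comp s t)
  qed (rule dpolys_act[OF G t pd])
qed

lemma vanishing_subset_denominator_ideal:
  assumes dr: "difference_ring G act"
  shows "dI G act n X \<subseteq> denominator_ideal G act n X f"
proof
  fix p assume "p \<in> dI G act n X"
  then have p: "p \<in> dpolys G n" "\<And>y. y \<in> X \<Longrightarrow> dpoly_eval act p y = 0"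
    unfolding dI_def by auto
  have "polynomial_on G act n X (\<lambda>y. act s (dpoly_eval act p y) * f y)" if "s \<in> carrier G" for s
    using polynomial_on_zero
    by (rule polynomial_on_cong) (simp add: p(2) ring_aut_zero difference_ringD(2)[OF dr that])
  then show "p \<in> denominator_ideal G act n X f"
    unfolding denominator_ideal_def using p(1) by blast
qed

lemma one_in_denominator_ideal:
  assumes dr: "difference_ring G act" and "1 \<in> denominator_ideal G act n X f"
  shows "polynomial_on G act n X f"
proof -
  have "\<one>\<^bsub>G\<^esub> \<in> carrier G" using difference_ringD(1)[OF dr] by (simp add: group.is_monoid monoid.one_closed)
  then have "polynomial_on G act n X (\<lambda>y. act \<one>\<^bsub>G\<^esub> (dpoly_eval act 1 y) * f y)"
    using assms(2) unfolding denominator_ideal_def by blast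
  then show ?thesis
    by (rule polynomial_on_cong) (simp add: dpoly_eval_one difference_ringD(3)[OF dr])
qed

lemma difference_closed_no_zeros:
  assumes "difference_closed G act" and "stable_ideal_R G act n I" and "dV act n I = {}"
  shows "1 \<in> I"
proof -
  have "radical_in (dpolys G n) I = dI G act n {}"
    using assms unfolding difference_closed_def by metis
  then have "1 \<in> radical_in (dpolys G n) I" by (simp add: dI_def dpolys_one)
  then obtain k where "1 ^ k \<in> I" unfolding radical_in_def by blast
  then show ?thesis by simp
qed

definition dpoly_norm :: "('g, 'b) monoid_scheme \<Rightarrow> ('g \<Rightarrow> 'a::comm_ring_1 \<Rightarrow> 'a) \<Rightarrow> ('g, 'a) dpoly \<Rightarrow> ('g, 'a) dpoly" where
  "dpoly_norm G act p = (\<Prod>s\<in>carrier G. dpoly_act G act s p)"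

lemma dpoly_eval_norm:
  assumes dr: "difference_ring G act" and p: "p \<in> dpolys G n"
  shows "dpoly_eval act (dpoly_norm G act p) y = (\<Prod>s\<in>carrier G. act s (dpoly_eval act p y))"
  unfolding dpoly_norm_def by (simp add: dpoly_eval_prod dpoly_eval_act[OF dr _ p])

text \<open>Values of the norm are fixed by Sigma, since translating permutes the factors.\<close>
lemma dpoly_norm_invariant:
  assumes dr: "difference_ring G act" and p: "p \<in> dpolys G n" and t: "t \<in> carrier G"
  shows "act t (dpoly_eval act (dpoly_norm G act p) y) = dpoly_eval act (dpoly_norm G act p) y"
proof -
  note G = difference_ringD(1)[OF dr] and aut = difference_ringD(2)[OF dr]
    and comp = difference_ringD(4)[OF dr]
  have "act t (dpoly_eval act (dpoly_norm G act p) y) = (\<Prod>s\<in>carrier G. act (t \<otimes>\<^bsub>G\<^esub> s) (dpoly_eval act p y))"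
    by (simp add: dpoly_eval_norm[OF dr p] ring_aut_prod aut t comp)
  also have "\<dots> = (\<Prod>s\<in>carrier G. act s (dpoly_eval act p y))"
    by (rule prod.reindex_bij_betw[OF group_left_mult_bij[OF G t]])
  finally show ?thesis by (simp add: dpoly_eval_norm[OF dr p])
qed

text \<open>If p is a denominator of f without translates, its norm is a denominator of f:
  the norm is p times the product of the other translates, and it is Sigma-invariant.\<close>
lemma dpoly_norm_in_denominator_ideal:
  assumes dr: "difference_ring G act" and fin: "finite (carrier G)" and p: "p \<in> dpolys G n"
    and pf: "polynomial_on G act n X (\<lambda>y. dpoly_eval act p y * f y)"
  shows "dpoly_norm G act p \<in> denominator_ideal G act n X f"
  unfolding denominator_ideal_def
proof (intro CollectI conjI ballI)
  note G = difference_ringD(1)[OF dr]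
  have one: "\<one>\<^bsub>G\<^esub> \<in> carrier G" using G by (simp add: group.is_monoid monoid.one_closed)
  show "dpoly_norm G act p \<in> dpolys G n"
    unfolding dpoly_norm_def by (intro dpolys_prod dpolys_act[OF G _ p])
  define R where "R = (\<Prod>s\<in>carrier G - {\<one>\<^bsub>G\<^esub>}. dpoly_act G act s p)"
  have R: "R \<in> dpolys G n" unfolding R_def by (intro dpolys_prod dpolys_act[OF G _ p]) auto
  have split: "dpoly_eval act (dpoly_norm G act p) y = dpoly_eval act R y * dpoly_eval act p y" for y
    unfolding dpoly_norm_def R_def
    by (simp add: prod.remove[OF fin one] dpoly_eval_mult dpoly_eval_act[OF dr one p]
        difference_ringD(3)[OF dr] mult.commute)
  fix t assume t: "t \<in> carrier G"
  from polynomial_on_scale[OF R pf]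
  show "polynomial_on G act n X (\<lambda>y. act t (dpoly_eval act (dpoly_norm G act p) y) * f y)"
    by (rule polynomial_on_cong) (simp only: dpoly_norm_invariant[OF dr p t], simp only: split mult.assoc)
qed

lemma dpoly_norm_unit:
  assumes dr: "difference_ring G act" and p: "p \<in> dpolys G n" and u: "dpoly_eval act p y dvd 1"
  shows "dpoly_eval act (dpoly_norm G act p) y dvd 1"
  unfolding dpoly_eval_norm[OF dr p]
  by (intro units_prod ring_aut_unit[OF difference_ringD(2)[OF dr] u])

text \<open>If f = h/g near y on X - V(E'), choose e in E' with e(y) nonzero
  and a combination S of the translates of e with S(y) = 1; S vanishes where e does, so
  S*g is a polynomial with (S*g)(y) = g(y) a unit and (S*g)*f = S*h on all of X.\<close>
lemma regular_local_denominator: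
  assumes pf: "pseudofield G act" and fin: "finite (carrier G)" and X: "X \<subseteq> points n"
    and reg: "regular_at G act n X f y"
  shows "\<exists>p\<in>dpolys G n. dpoly_eval act p y dvd 1 \<and> polynomial_on G act n X (\<lambda>z. dpoly_eval act p z * f z)"
proof -
  have dr: "difference_ring G act" using pf unfolding pseudofield_def by blast
  note G = difference_ringD(1)[OF dr] and aut = difference_ringD(2)[OF dr]
  obtain E' h g where E': "E' \<subseteq> dpolys G n" "y \<in> X - dV act n E'" and hg: "h \<in> dpolys G n" "g \<in> dpolys G n"
    and frac: "\<And>z. z \<in> X - dV act n E' \<Longrightarrow> dpoly_eval act g z dvd 1 \<and> f z * dpoly_eval act g z = dpoly_eval act h z"
    using reg unfolding regular_at_def open_in_pv_def by blast
  obtain e where e: "e \<in> E'" "dpoly_eval act e y \<noteq> 0" using E'(2) X unfolding dV_def by blast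
  have ed: "e \<in> dpolys G n" using e E' by blast
  obtain c where c: "(\<Sum>s\<in>carrier G. c s * act s (dpoly_eval act e y)) = 1"
    using pseudofield_orbit_unit[OF pf fin e(2)] by blast
  define S where "S = (\<Sum>s\<in>carrier G. Poly_Mapping.single 0 (c s) * dpoly_act G act s e)"
  have S: "S \<in> dpolys G n" unfolding S_def
    by (intro dpolys_sum dpolys_mult dpolys_const dpolys_act[OF G _ ed])
  have evS: "dpoly_eval act S z = (\<Sum>s\<in>carrier G. c s * act s (dpoly_eval act e z))" for z
    unfolding S_def by (simp add: dpoly_eval_sum dpoly_eval_mult dpoly_eval_single mon_eval_def dpoly_eval_act[OF dr _ ed])
  have "polynomial_on G act n X (\<lambda>z. dpoly_eval act (S * g) z * f z)"
    unfolding polynomial_on_def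
  proof (intro bexI[of _ "S * h"] ballI)
    fix z assume z: "z \<in> X"
    show "dpoly_eval act (S * g) z * f z = dpoly_eval act (S * h) z"
    proof (cases "z \<in> dV act n E'")
      case True
      then have "dpoly_eval act e z = 0" using e(1) unfolding dV_def by blast
      then show ?thesis by (simp add: dpoly_eval_mult evS ring_aut_zero aut)
    next
      case False
      then show ?thesis using frac[of z] z by (simp add: dpoly_eval_mult mult.assoc mult.commute[of "f z"])
    qed
  qed (intro dpolys_mult S hg)
  moreover have "dpoly_eval act (S * g) y dvd 1" using frac[OF E'(2)] c by (simp add: dpoly_eval_mult evS)
  ultimately show ?thesis using S hg by (blast intro: dpolys_mult)
qed

lemma denominator_ideal_no_zeros:
  assumes pf: "pseudofield G act" and fin: "finite (carrier G)" and nontriv: "(1::'a::comm_ring_1) \<noteq> 0"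
    and E: "E \<subseteq> dpolys G n" "X = dV act n E" and reg: "\<forall>x\<in>X. regular_at G act n X f x"
  shows "dV act n (denominator_ideal G act n X f) = {}"
proof (rule ccontr)
  have dr: "difference_ring G act" using pf unfolding pseudofield_def by blast
  assume "dV act n (denominator_ideal G act n X f) \<noteq> {}"
  then obtain y where y: "y \<in> points n" "\<And>p. p \<in> denominator_ideal G act n X f \<Longrightarrow> dpoly_eval act p y = 0"
    unfolding dV_def by blast
  show False
  proof (cases "y \<in> X")
    case False
    then obtain e where e: "e \<in> E" "dpoly_eval act e y \<noteq> 0" using E y(1) unfolding dV_def by blast
    have "e \<in> dI G act n X" using e E unfolding dI_def dV_def by blast
    then show False using y(2) e(2) vanishing_subset_denominator_ideal[OF dr] by blast
  next
    case True
    have X: "X \<subseteq> points n" using E(2) unfolding dV_def by blast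
    obtain p where p: "p \<in> dpolys G n" "dpoly_eval act p y dvd 1"
      "polynomial_on G act n X (\<lambda>z. dpoly_eval act p z * f z)"
      using regular_local_denominator[OF pf fin X] reg True by blast
    have "dpoly_eval act (dpoly_norm G act p) y = 0"
      using y(2) dpoly_norm_in_denominator_ideal[OF dr fin p(1,3)] by blast
    then show False using dpoly_norm_unit[OF dr p(1,2)] nontriv by simp
  qed
qed

theorem theorem4p30:
  fixes G :: "('g, 'b) monoid_scheme" and act :: "'g \<Rightarrow> 'a::comm_ring_1 \<Rightarrow> 'a"
    and n :: nat and X :: "(nat \<Rightarrow> 'a) set" and f :: "(nat \<Rightarrow> 'a) \<Rightarrow> 'a"
  assumes "finite (carrier G)"
    and "difference_closed G act"
    and "pseudovariety G act n X"
    and "\<forall>x\<in>X. regular_at G act n X f x"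
  shows "\<exists>p\<in>dpolys G n. \<forall>x\<in>X. f x = dpoly_eval act p x"
proof (cases "(1::'a) = 0")
  case True
  then have "\<And>x::'a. x = 0" by (metis mult_1 mult_zero_left)
  then show ?thesis using dpolys_zero by metis
next
  case nontriv: False
  have pf: "pseudofield G act" using assms(2) unfolding difference_closed_def by blast
  then have dr: "difference_ring G act" unfolding pseudofield_def by blast
  obtain E where E: "E \<subseteq> dpolys G n" "X = dV act n E"
    using assms(3) unfolding pseudovariety_def by blast
  let ?Q = "denominator_ideal G act n X f"
  have "dV act n ?Q = {}"
    using denominator_ideal_no_zeros[OF pf assms(1) nontriv E assms(4)] .
  then have "1 \<in> ?Q"
    using difference_closed_no_zeros[OF assms(2) denominator_ideal_stable[OF dr]] by blast
  then have "polynomial_on G act n X f" by (rule one_in_denominator_ideal[OF dr])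
  then show ?thesis unfolding polynomial_on_def by blast
qed

end
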